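(* Let $|q|<1$ and $|qa|<|z|$, with parameters such that no denominator vanishes. Then $$f(a,k,z,q)=\sum_{n=1}^{\infty}\frac{k q^n}{1-kq^n}+\sum_{n=1}^{\infty}\frac{q^n a/z}{1-q^n a/z}-\sum_{n=1}^{\infty}\frac{a q^n}{1-aq^n}-\sum_{n=1}^{\infty}\frac{q^n k/z}{1-q^n k/z}.$$
   Context: Notation: $(x;q)_n=(1-x)(1-xq)\cdots(1-xq^{n-1})$, $(x_1,\dots,x_m;q)_n=(x_1;q)_n\cdots(x_m;q)_n$. Define $$f(a,k,z,q):=\sum_{n=1}^{\infty}\frac{(q\sqrt{k},-q\sqrt{k},k,z,k/a;q)_{n}}{(\sqrt{k},-\sqrt{k},qk,qk/z,qa;q)_{n}(1-q^n)}\left(\frac{qa}{z}\right)^{n}.$$ *)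

theory Defs
  imports "HOL-Analysis.Analysis"
begin

definition qpoch :: "complex \<Rightarrow> complex \<Rightarrow> nat \<Rightarrow> complex" where
  "qpoch x q n = (\<Prod>j<n. 1 - x * q ^ j)"

definition f_term :: "complex \<Rightarrow> complex \<Rightarrow> complex \<Rightarrow> complex \<Rightarrow> nat \<Rightarrow> complex" where
  "f_term a k z q n =
     (qpoch (q * csqrt k) q n * qpoch (- q * csqrt k) q n * qpoch k q n * qpoch z q n * qpoch (k / a) q n)
     / (qpoch (csqrt k) q n * qpoch (- csqrt k) q n * qpoch (q * k) q n * qpoch (q * k / z) q n
        * qpoch (q * a) q n * (1 - q ^ n))
     * (q * a / z) ^ n"

definition f :: "complex \<Rightarrow> complex \<Rightarrow> complex \<Rightarrow> complex \<Rightarrow> complex" where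
  "f a k z q = (\<Sum>n. f_term a k z q (Suc n))"

end

theory Submission
  imports Defs
begin

(* Put w = 1/z and b = k/a. Then f is the sum L(a,k,w) of a series whose terms are explicit in
   q^m, and the shift (a,k,w) |-> (aq,kq,wq) keeps b fixed. The right-hand side R(a,k,w) is a
   combination of four Lambert series, and the shift merely strips off their leading terms, so
   R(a,k,w) - R(aq,kq,wq) = rho(a,k,w) for an explicit rational function rho (shift_defect).
   The series L satisfies the same first-order q-difference equation: termwise, L(a,k,w) minus
   its shift telescopes against an explicit antidifference whose value at m = 0 is rho. Hence
   L - R is invariant under the shift, and since both L and R tend to 0 along the iterated
   shifts (a,k,w) q^N, we get L = R. *)

section \<open>q-Pochhammer symbols\<close>

lemma qpoch_0 [simp]: "qpoch x q 0 = 1"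
  by (simp add: qpoch_def)

lemma qpoch_Suc: "qpoch x q (Suc n) = qpoch x q n * (1 - x * q ^ n)"
  by (simp add: qpoch_def)

lemma qpoch_Suc_shift: "qpoch (x * q) q n * (1 - x) = qpoch x q (Suc n)"
  unfolding qpoch_def prod.lessThan_Suc_shift by (simp add: mult_ac)

lemma qpoch_nonzero:
  assumes "\<And>e. 1 - x * q ^ Suc e \<noteq> 0"
  shows "qpoch (q * x) q n \<noteq> 0"
proof -
  have "1 - q * x * q ^ j \<noteq> 0" for j
    using assms[of j] by (simp add: mult_ac)
  then show ?thesis by (simp add: qpoch_def)
qed

lemma qpoch_tendsto:
  assumes "X \<longlonglongrightarrow> L"
  shows "(\<lambda>N. qpoch (X N) q n) \<longlonglongrightarrow> qpoch L q n"
  unfolding qpoch_def by (intro tendsto_intros assms)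

lemma qpoch_well_poised:
  "qpoch (q * u) q n * qpoch (- q * u) q n * (1 - u^2)
     = qpoch u q n * qpoch (- u) q n * (1 - u^2 * q ^ (2 * n))"
proof (induction n)
  case 0
  show ?case by simp
next
  case (Suc n)
  have "qpoch (q * u) q (Suc n) * qpoch (- q * u) q (Suc n) * (1 - u^2)
      = (qpoch (q * u) q n * qpoch (- q * u) q n * (1 - u^2)) * ((1 - q * u * q ^ n) * (1 + q * u * q ^ n))"
    by (simp add: qpoch_Suc mult_ac)
  also have "\<dots> = qpoch u q n * qpoch (- u) q n * (1 - u^2 * q ^ (2 * n)) * ((1 - q * u * q ^ n) * (1 + q * u * q ^ n))"
    by (simp only: Suc.IH)
  also have "\<dots> = qpoch u q (Suc n) * qpoch (- u) q (Suc n) * (1 - u^2 * q ^ (2 * Suc n))"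
    by (simp add: qpoch_Suc power_add power_mult power2_eq_square algebra_simps)
  finally show ?case .
qed

lemma qpoch_mult_power_divide:
  fixes z q a :: complex
  assumes "z \<noteq> 0"
  shows "qpoch z q n * (q * a / z) ^ n = (q * a) ^ n * (\<Prod>j<n. 1 / z - q ^ j)"
proof (induction n)
  case 0
  show ?case by simp
next
  case (Suc n)
  have "qpoch z q (Suc n) * (q * a / z) ^ Suc n = (qpoch z q n * (q * a / z) ^ n) * ((1 - z * q ^ n) * (q * a / z))"
    by (simp add: qpoch_Suc mult_ac)
  also have "(1 - z * q ^ n) * (q * a / z) = q * a * (1 / z - q ^ n)"
    using assms by (simp add: field_simps)
  finally show ?case using Suc.IH by (simp add: mult_ac)
qed

lemma norm_mult_power_le:
  fixes q x :: "'a::real_normed_div_algebra"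
  assumes "norm q \<le> 1"
  shows "norm (x * q ^ j) \<le> norm x"
proof -
  have "norm q ^ j \<le> 1" using assms by (simp add: power_le_one)
  then show ?thesis by (simp add: norm_mult norm_power mult_left_le)
qed

lemma norm_one_minus_ge_half:
  fixes x :: "'a::real_normed_algebra_1"
  assumes "norm x \<le> 1/2"
  shows "1/2 \<le> norm (1 - x)"
  using norm_triangle_ineq2[of 1 x] assms by simp

lemma norm_one_minus_mult_power_bounds:
  fixes q x :: "'a::real_normed_div_algebra"
  assumes "norm q \<le> 1" "norm x \<le> 1/2"
  shows "1/2 \<le> norm (1 - x * q ^ j)" "norm (1 - x * q ^ j) \<le> 3/2"
proof -
  have "norm (x * q ^ j) \<le> 1/2"
    using norm_mult_power_le[OF assms(1), of x j] assms(2) by linarith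
  then show "1/2 \<le> norm (1 - x * q ^ j)" "norm (1 - x * q ^ j) \<le> 3/2"
    using norm_one_minus_ge_half norm_triangle_ineq4[of 1 "x * q ^ j"] by auto
qed

lemma LIMSEQ_power_double_zero:
  fixes q :: "'a::real_normed_div_algebra"
  assumes "norm q < 1"
  shows "(\<lambda>n. q ^ (2 * n + j)) \<longlonglongrightarrow> 0"
proof -
  have "(\<lambda>n. q ^ n * q ^ (n + j)) \<longlonglongrightarrow> 0 * 0"
    by (intro tendsto_intros LIMSEQ_power_zero LIMSEQ_ignore_initial_segment assms)
  then show ?thesis by (simp add: power_add mult_2 mult.assoc)
qed

lemma eventually_norm_le_half:
  fixes X :: "nat \<Rightarrow> 'a::real_normed_vector"
  assumes "X \<longlonglongrightarrow> 0"
  shows "eventually (\<lambda>N. norm (X N) \<le> 1/2) sequentially"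
proof -
  have "eventually (\<lambda>N. norm (X N) < 1/2) sequentially"
    using tendsto_norm[OF assms] by (rule order_tendstoD(2)) simp
  then show ?thesis by (rule eventually_mono) simp
qed

lemma norm_suminf_mult_le:
  fixes c d :: "nat \<Rightarrow> 'a::{real_normed_div_algebra, banach}"
  assumes c: "\<And>m. norm (c (Suc m)) \<le> norm (c m) / 2" and d: "\<And>m. norm (d m) \<le> B"
  shows "norm (\<Sum>m. c m * d m) \<le> 2 * B * norm (c 0)"
proof -
  have B: "0 \<le> B"
    using norm_ge_zero d order_trans by blast
  have c_le: "norm (c m) \<le> norm (c 0) * (1/2) ^ m" for m
  proof (induction m)
    case (Suc m)
    then show ?case using c[of m] by simp
  qed simp
  have term_le: "norm (c m * d m) \<le> B * norm (c 0) * (1/2) ^ m" for m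
    using mult_mono[OF c_le d[of m]] B by (simp add: norm_mult mult_ac)
  have "norm (\<Sum>m. c m * d m) \<le> (\<Sum>m. B * norm (c 0) * (1/2::real) ^ m)"
    by (intro norm_suminf_le term_le summable_mult summable_geometric) simp
  also have "\<dots> = 2 * B * norm (c 0)"
    using suminf_mult[OF summable_geometric[of "1/2::real"], of "B * norm (c 0)"]
    by (simp add: suminf_geometric)
  finally show ?thesis .
qed

lemma diff_frac_eq_diff_frac:
  fixes A C E G b d f h u v s t X :: "'a::field"
  assumes "b * u = X" "d * v = X" "f * s = X" "h * t = X" "X \<noteq> 0"
    and "A * u - C * v = E * s - G * t"
  shows "A / b - C / d = E / f - G / h"
proof -
  have expand: "Y / y = Y * z / X" if "y * z = X" for Y y z
    using that assms(5) by auto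
  have "A / b = A * u / X" "C / d = C * v / X" "E / f = E * s / X" "G / h = G * t / X"
    using assms(1-4) by (simp_all add: expand)
  then show ?thesis
    using assms(6) by (simp add: diff_divide_distrib[symmetric])
qed

section \<open>Lambert series\<close>

definition lambert_term :: "complex \<Rightarrow> complex \<Rightarrow> nat \<Rightarrow> complex" where
  "lambert_term q x m = x * q ^ Suc m / (1 - x * q ^ Suc m)"

lemma norm_lambert_term_le:
  assumes "norm (x * q ^ Suc m) \<le> 1/2"
  shows "norm (lambert_term q x m) \<le> 2 * norm x * norm q ^ Suc m"
proof -
  have "1/2 \<le> norm (1 - x * q ^ Suc m)"
    using assms by (rule norm_one_minus_ge_half)
  then have "norm (lambert_term q x m) \<le> norm (x * q ^ Suc m) / (1/2)"
    unfolding lambert_term_def norm_divide by (intro divide_left_mono) auto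
  then show ?thesis by (simp add: norm_mult norm_power)
qed

lemma summable_lambert_term:
  assumes "norm q < 1"
  shows "summable (lambert_term q x)"
proof (rule summable_comparison_test_ev)
  have "(\<lambda>m. x * q ^ Suc m) \<longlonglongrightarrow> 0"
    using tendsto_mult_right_zero[OF LIMSEQ_ignore_initial_segment[OF LIMSEQ_power_zero[OF assms], of 1]]
    by simp
  then have "eventually (\<lambda>m. norm (x * q ^ Suc m) \<le> 1/2) sequentially"
    by (rule eventually_norm_le_half)
  then show "eventually (\<lambda>m. norm (lambert_term q x m) \<le> 2 * norm x * norm q ^ Suc m) sequentially"
    by (rule eventually_mono) (rule norm_lambert_term_le)
  show "summable (\<lambda>m. 2 * norm x * norm q ^ Suc m)"
    using assms by (intro summable_mult summable_Suc_iff[THEN iffD2] summable_geometric) simp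
qed

lemma lambert_term_shift: "lambert_term q (x * q) m = lambert_term q x (Suc m)"
  by (simp add: lambert_term_def mult_ac)

lemma suminf_lambert_term_shift:
  assumes "norm q < 1"
  shows "suminf (lambert_term q (x * q)) = suminf (lambert_term q x) - lambert_term q x 0"
  unfolding lambert_term_shift by (rule suminf_split_head[OF summable_lambert_term[OF assms]])

lemma suminf_lambert_term_tendsto_0:
  assumes q: "norm q < 1" and X: "X \<longlonglongrightarrow> 0"
  shows "(\<lambda>N. suminf (lambert_term q (X N))) \<longlonglongrightarrow> 0"
proof (rule Lim_null_comparison)
  have geom: "(\<Sum>m. norm q ^ Suc m) = norm q / (1 - norm q)"
    using q by (simp add: suminf_mult summable_geometric suminf_geometric)
  show "eventually (\<lambda>N. norm (suminf (lambert_term q (X N))) \<le> 2 * norm q / (1 - norm q) * norm (X N)) sequentially"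
    using eventually_norm_le_half[OF X]
  proof (rule eventually_mono)
    fix N assume XN: "norm (X N) \<le> 1/2"
    have "norm (X N * q ^ Suc m) \<le> 1/2" for m
      using norm_mult_power_le[of q "X N" "Suc m"] q XN by simp
    then have "norm (suminf (lambert_term q (X N))) \<le> (\<Sum>m. 2 * norm (X N) * norm q ^ Suc m)"
      using q by (intro norm_suminf_le norm_lambert_term_le summable_mult summable_Suc_iff[THEN iffD2]
          summable_geometric) auto
    also have "\<dots> = 2 * norm (X N) * (\<Sum>m. norm q ^ Suc m)"
      using q by (intro suminf_mult summable_Suc_iff[THEN iffD2] summable_geometric) simp
    also have "(\<Sum>m. norm q ^ Suc m) = norm q / (1 - norm q)"
      by (rule geom)
    finally show "norm (suminf (lambert_term q (X N))) \<le> 2 * norm q / (1 - norm q) * norm (X N)"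
      by (simp add: mult_ac)
  qed
  show "(\<lambda>N. 2 * norm q / (1 - norm q) * norm (X N)) \<longlonglongrightarrow> 0"
    by (rule tendsto_mult_right_zero[OF tendsto_norm_zero[OF X]])
qed

definition shift_defect :: "complex \<Rightarrow> complex \<Rightarrow> complex \<Rightarrow> complex \<Rightarrow> complex" where
  "shift_defect q a k w = k*q/(1-k*q) + a*w*q/(1-a*w*q) + a*w*q^2/(1-a*w*q^2)
     - a*q/(1-a*q) - k*w*q/(1-k*w*q) - k*w*q^2/(1-k*w*q^2)"

definition rhs_sum :: "complex \<Rightarrow> complex \<Rightarrow> complex \<Rightarrow> complex \<Rightarrow> complex" where
  "rhs_sum q a k w = suminf (lambert_term q k) + suminf (lambert_term q (a * w))
     - suminf (lambert_term q a) - suminf (lambert_term q (k * w))"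

lemma rhs_sum_shift:
  assumes q: "norm q < 1"
  shows "rhs_sum q a k w - rhs_sum q (a * q) (k * q) (w * q) = shift_defect q a k w"
proof -
  have double_shift: "a * q * (w * q) = a * w * q * q" "k * q * (w * q) = k * w * q * q"
    by (simp_all add: mult_ac)
  have "rhs_sum q a k w - rhs_sum q (a * q) (k * q) (w * q)
      = lambert_term q k 0 + lambert_term q (a * w) 0 + lambert_term q (a * w) 1
        - lambert_term q a 0 - lambert_term q (k * w) 0 - lambert_term q (k * w) 1"
    unfolding rhs_sum_def double_shift suminf_lambert_term_shift[OF q] lambert_term_shift
    by (simp add: algebra_simps)
  also have "\<dots> = shift_defect q a k w"
    unfolding shift_defect_def lambert_term_def by (simp add: mult_ac power2_eq_square)
  finally show ?thesis .
qed

lemma rhs_sum_shift_power_tendsto_0: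
  assumes q: "norm q < 1"
  shows "(\<lambda>N. rhs_sum q (a * q ^ N) (k * q ^ N) (w * q ^ N)) \<longlonglongrightarrow> 0"
proof -
  have lim: "(\<lambda>N. x * q ^ N) \<longlonglongrightarrow> 0" for x
    using tendsto_mult_right_zero[OF LIMSEQ_power_zero[OF q]] .
  have "(\<lambda>N. rhs_sum q (a * q ^ N) (k * q ^ N) (w * q ^ N)) \<longlonglongrightarrow> 0 + 0 - 0 - 0"
    unfolding rhs_sum_def
    by (intro tendsto_intros suminf_lambert_term_tendsto_0 q lim tendsto_mult_zero)
  then show ?thesis by simp
qed

section \<open>The series of f in shift-adapted coordinates\<close>

(* The hypotheses of the theorem in the coordinates w = 1/z, in a form that survives the shift. *)
definition admissible :: "complex \<Rightarrow> complex \<Rightarrow> complex \<Rightarrow> complex \<Rightarrow> bool" where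
  "admissible q a k w \<longleftrightarrow> norm q < 1 \<and> norm (q * a * w) < 1 \<and>
     (\<forall>e. 1 - k * q ^ Suc e \<noteq> 0) \<and> (\<forall>e. 1 - a * q ^ Suc e \<noteq> 0) \<and> (\<forall>e. 1 - k * w * q ^ Suc e \<noteq> 0)"

lemma admissible_norm:
  assumes "admissible q a k w"
  shows "norm q < 1" "norm (q * a * w) < 1"
  using assms by (auto simp: admissible_def)

lemma admissible_factors_nonzero:
  assumes H: "admissible q a k w" and n: "0 < n"
  shows "1 - k * q ^ n \<noteq> 0" "1 - a * q ^ n \<noteq> 0" "1 - k * w * q ^ n \<noteq> 0" "1 - q ^ n \<noteq> 0"
proof -
  obtain e where e: "n = Suc e" using n gr0_implies_Suc by blast
  show "1 - k * q ^ n \<noteq> 0" "1 - a * q ^ n \<noteq> 0" "1 - k * w * q ^ n \<noteq> 0"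
    using H e by (auto simp: admissible_def)
  have "norm (q ^ n) < 1"
    using admissible_norm(1)[OF H] n by (simp add: norm_power power_less_one_iff)
  then show "1 - q ^ n \<noteq> 0" by auto
qed

lemma admissible_qpoch_nonzero:
  assumes "admissible q a k w"
  shows "qpoch (q * a) q n \<noteq> 0" "qpoch (q * (k * w)) q n \<noteq> 0"
  using assms by (auto simp: admissible_def intro!: qpoch_nonzero)

lemma admissible_aw_nonzero:
  assumes "admissible q a k w"
  shows "(1 - q * a * w) * (1 - q^2 * a * w) \<noteq> 0"
proof -
  have q: "norm q < 1" and h: "norm (q * a * w) < 1"
    using admissible_norm[OF assms] by auto
  have "norm (q^2 * a * w) = norm q * norm (q * a * w)"
    by (simp add: norm_mult power2_eq_square)
  also have "\<dots> \<le> norm (q * a * w)"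
    using q by (intro mult_left_le_one_le) auto
  finally have "norm (q^2 * a * w) < 1" using h by linarith
  then show ?thesis using h by auto
qed

lemma admissible_shift:
  assumes H: "admissible q a k w"
  shows "admissible q (a * q) (k * q) (w * q)"
proof -
  have q: "norm q < 1" and h: "norm (q * a * w) < 1"
    using admissible_norm[OF H] by auto
  have "norm (q * (a * q) * (w * q)) = norm (q * a * w) * (norm q * norm q)"
    by (simp add: norm_mult)
  also have "\<dots> \<le> norm (q * a * w)"
    using q by (intro mult_left_le) (auto simp: mult_le_one)
  finally have "norm (q * (a * q) * (w * q)) < 1" using h by linarith
  moreover have "1 - k * q * q ^ Suc e \<noteq> 0" "1 - a * q * q ^ Suc e \<noteq> 0"
      "1 - k * q * (w * q) * q ^ Suc e \<noteq> 0" for e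
    using admissible_factors_nonzero[OF H, of "Suc (Suc e)"]
      admissible_factors_nonzero[OF H, of "Suc (Suc (Suc e))"] by (simp_all add: mult_ac)
  ultimately show ?thesis using q by (simp add: admissible_def)
qed

lemma admissible_shift_power:
  assumes "admissible q a k w"
  shows "admissible q (a * q ^ N) (k * q ^ N) (w * q ^ N)"
proof (induction N)
  case 0
  show ?case using assms by simp
next
  case (Suc N)
  have "x * q ^ Suc N = x * q ^ N * q" for x :: complex
    by (simp add: mult.assoc)
  then show ?case using admissible_shift[OF Suc.IH] by metis
qed

(* With b = k/a and w = 1/z, lhs_term q b a k w m is the (m+1)-st term of f (f_term_eq_lhs_term):
   lhs_coeff is the part that gets multiplied by lhs_ratio when m increases, lhs_weight the rest,
   with the very-well-poised factor already collapsed by qpoch_well_poised. *)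

definition lhs_coeff :: "complex \<Rightarrow> complex \<Rightarrow> complex \<Rightarrow> complex \<Rightarrow> complex \<Rightarrow> nat \<Rightarrow> complex" where
  "lhs_coeff q b a k w m = qpoch b q (Suc m) * (q * a) ^ Suc m * (\<Prod>j<m. w - q ^ j)
     / (qpoch (q * a) q (m + 2) * qpoch (q * (k * w)) q (m + 3))"

definition lhs_weight :: "complex \<Rightarrow> complex \<Rightarrow> complex \<Rightarrow> complex \<Rightarrow> nat \<Rightarrow> complex" where
  "lhs_weight q a k w m = (w - q ^ m) * (1 - a * q ^ (m + 2)) * (1 - k * w * q ^ (m + 2))
     * (1 - k * w * q ^ (m + 3)) * (1 - k * q ^ (2 * m + 2)) / ((1 - k * q ^ (m + 1)) * (1 - q ^ (m + 1)))"

definition lhs_term :: "complex \<Rightarrow> complex \<Rightarrow> complex \<Rightarrow> complex \<Rightarrow> complex \<Rightarrow> nat \<Rightarrow> complex" where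
  "lhs_term q b a k w m = lhs_coeff q b a k w m * lhs_weight q a k w m"

definition lhs_sum :: "complex \<Rightarrow> complex \<Rightarrow> complex \<Rightarrow> complex \<Rightarrow> complex \<Rightarrow> complex" where
  "lhs_sum q b a k w = suminf (lhs_term q b a k w)"

definition lhs_ratio :: "complex \<Rightarrow> complex \<Rightarrow> complex \<Rightarrow> complex \<Rightarrow> complex \<Rightarrow> nat \<Rightarrow> complex" where
  "lhs_ratio q b a k w m = (1 - b * q ^ Suc m) * (q * a) * (w - q ^ m)
     / ((1 - a * q ^ (m + 3)) * (1 - k * w * q ^ (m + 4)))"

lemma lhs_coeff_Suc:
  assumes H: "admissible q a k w"
  shows "lhs_coeff q b a k w (Suc m) = lhs_coeff q b a k w m * lhs_ratio q b a k w m"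
proof -
  have "qpoch (q * a) q (Suc m + 2) = qpoch (q * a) q (m + 2) * (1 - a * q ^ (m + 3))"
    "qpoch (q * (k * w)) q (Suc m + 3) = qpoch (q * (k * w)) q (m + 3) * (1 - k * w * q ^ (m + 4))"
    "qpoch b q (Suc (Suc m)) = qpoch b q (Suc m) * (1 - b * q ^ Suc m)"
    "(q * a) ^ Suc (Suc m) = (q * a) ^ Suc m * (q * a)"
    "(\<Prod>j<Suc m. w - q ^ j) = (\<Prod>j<m. w - q ^ j) * (w - q ^ m)"
    by (simp_all only: qpoch_Suc add_Suc power_Suc2 prod.lessThan_Suc)
      (simp_all add: mult_ac power_add eval_nat_numeral)
  moreover have "qpoch (q * a) q (m + 2) \<noteq> 0" "qpoch (q * (k * w)) q (m + 3) \<noteq> 0"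
    "1 - a * q ^ (m + 3) \<noteq> 0" "1 - k * w * q ^ (m + 4) \<noteq> 0"
    using admissible_qpoch_nonzero[OF H] admissible_factors_nonzero[OF H] by auto
  ultimately show ?thesis
    unfolding lhs_coeff_def lhs_ratio_def by (simp only:) (simp add: field_simps)
qed

lemma summable_norm_lhs_coeff:
  assumes H: "admissible q a k w"
  shows "summable (\<lambda>m. norm (lhs_coeff q b a k w m))"
proof -
  have q: "norm q < 1" and qaw: "norm (q * a * w) < 1"
    using admissible_norm[OF H] by auto
  note power_lim = LIMSEQ_power_zero[OF q] LIMSEQ_ignore_initial_segment[OF LIMSEQ_power_zero[OF q]]
  have "lhs_ratio q b a k w \<longlonglongrightarrow> (1 - b * 0) * (q * a) * (w - 0) / ((1 - a * 0) * (1 - k * w * 0))"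
    unfolding lhs_ratio_def[abs_def] Suc_eq_plus1 by (intro tendsto_intros power_lim) simp
  then have "(\<lambda>m. norm (lhs_ratio q b a k w m)) \<longlonglongrightarrow> norm (q * a * w)"
    by (simp add: tendsto_norm mult.assoc)
  then have "eventually (\<lambda>m. norm (lhs_ratio q b a k w m) < (1 + norm (q * a * w)) / 2) sequentially"
    by (rule order_tendstoD(2)) (use qaw in simp)
  then obtain M where M: "\<And>m. m \<ge> M \<Longrightarrow> norm (lhs_ratio q b a k w m) < (1 + norm (q * a * w)) / 2"
    by (auto simp: eventually_sequentially)
  show ?thesis
  proof (rule summable_ratio_test[where c = "(1 + norm (q * a * w)) / 2" and N = M])
    show "(1 + norm (q * a * w)) / 2 < 1" using qaw by simp
    fix m assume "m \<ge> M"
    then have "norm (lhs_coeff q b a k w m) * norm (lhs_ratio q b a k w m)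
        \<le> norm (lhs_coeff q b a k w m) * ((1 + norm (q * a * w)) / 2)"
      using M[of m] by (intro mult_left_mono) auto
    then show "norm (norm (lhs_coeff q b a k w (Suc m))) \<le> (1 + norm (q * a * w)) / 2 * norm (norm (lhs_coeff q b a k w m))"
      by (simp add: lhs_coeff_Suc[OF H] norm_mult mult.commute)
  qed
qed

lemma lhs_coeff_tendsto_0:
  assumes "admissible q a k w"
  shows "lhs_coeff q b a k w \<longlonglongrightarrow> 0"
  using summable_LIMSEQ_zero[OF summable_norm_lhs_coeff[OF assms]] by (rule tendsto_norm_zero_cancel)

lemma lhs_weight_tendsto:
  assumes "norm q < 1"
  shows "lhs_weight q a k w \<longlonglongrightarrow> w"
proof -
  note power_lim = LIMSEQ_power_zero[OF assms] LIMSEQ_ignore_initial_segment[OF LIMSEQ_power_zero[OF assms]]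
    LIMSEQ_power_double_zero[OF assms]
  have "lhs_weight q a k w \<longlonglongrightarrow> (w - 0) * (1 - a * 0) * (1 - k * w * 0) * (1 - k * w * 0) * (1 - k * 0)
      / ((1 - k * 0) * (1 - 0))"
    unfolding lhs_weight_def[abs_def] by (intro tendsto_intros power_lim) simp
  then show ?thesis by simp
qed

lemma summable_lhs_term:
  assumes H: "admissible q a k w"
  shows "summable (lhs_term q b a k w)"
proof -
  have "Bseq (lhs_weight q a k w)"
    using lhs_weight_tendsto[OF admissible_norm(1)[OF H]] by (rule convergent_imp_Bseq[OF convergentI])
  then obtain B where B: "\<And>m. norm (lhs_weight q a k w m) \<le> B"
    by (auto simp: Bseq_def)
  show ?thesis
  proof (rule summable_comparison_test'[where N = 0])
    show "summable (\<lambda>m. norm (lhs_coeff q b a k w m) * B)"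
      by (intro summable_mult2 summable_norm_lhs_coeff H)
    show "norm (lhs_term q b a k w m) \<le> norm (lhs_coeff q b a k w m) * B" for m
      unfolding lhs_term_def norm_mult using B[of m] by (intro mult_left_mono) auto
  qed
qed

(* f_term_eq_lhs_term with the q-Pochhammer products abstracted to variables. *)
lemma f_term_eq_lhs_term_algebra:
  fixes A1 A2 S1 S2 K K' Z Zk Qa Bk Pw E F X5 X6 k c1 c2 d1 e1 e2 p w Qn :: complex
  assumes R1: "A1 * A2 * (1 - k) = S1 * S2 * (1 - c2)"
    and R2: "K * (1 - c1) = K' * (1 - k)"
    and R3: "Z * E = F * (Pw * (w - p))"
    and R4: "X5 = Qa * (1 - d1)"
    and R5: "X6 = Zk * (1 - e1) * (1 - e2)"
    and nz: "S1 \<noteq> 0" "S2 \<noteq> 0" "K' \<noteq> 0" "Zk \<noteq> 0" "Qa \<noteq> 0" "1 - Qn \<noteq> 0" "1 - k \<noteq> 0"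
      "1 - c1 \<noteq> 0" "1 - d1 \<noteq> 0" "1 - e1 \<noteq> 0" "1 - e2 \<noteq> 0"
  shows "A1 * A2 * K * Z * Bk / (S1 * S2 * K' * Zk * Qa * (1 - Qn)) * E
    = Bk * F * Pw / (X5 * X6) * ((w - p) * (1 - d1) * (1 - e1) * (1 - e2) * (1 - c2) / ((1 - c1) * (1 - Qn)))"
proof -
  have d1: "S1 * S2 * K' * Zk * Qa * (1 - Qn) \<noteq> 0" and d2: "X5 * X6 * ((1 - c1) * (1 - Qn)) \<noteq> 0"
    using nz unfolding R4 R5 by simp_all
  have l: "A1 * A2 * K * Z * Bk / (S1 * S2 * K' * Zk * Qa * (1 - Qn)) * E
      = A1 * A2 * K * Z * Bk * E / (S1 * S2 * K' * Zk * Qa * (1 - Qn))"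
    by (rule times_divide_eq_left)
  have r: "Bk * F * Pw / (X5 * X6) * ((w - p) * (1 - d1) * (1 - e1) * (1 - e2) * (1 - c2) / ((1 - c1) * (1 - Qn)))
      = Bk * F * Pw * ((w - p) * (1 - d1) * (1 - e1) * (1 - e2) * (1 - c2)) / (X5 * X6 * ((1 - c1) * (1 - Qn)))"
    by (rule times_divide_times_eq)
  have "A1 * A2 * K * Z * Bk * E * (X5 * X6 * ((1 - c1) * (1 - Qn)))
      = Bk * F * Pw * ((w - p) * (1 - d1) * (1 - e1) * (1 - e2) * (1 - c2)) * (S1 * S2 * K' * Zk * Qa * (1 - Qn))"
    using R1 R2 R3 R4 R5 nz(7) by algebra
  then show ?thesis
    unfolding l r frac_eq_eq[OF d1 d2] .
qed

lemma f_term_eq_lhs_term: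
  assumes z: "z \<noteq> 0" and H: "admissible q a k (1 / z)"
    and sqrt_nz: "\<And>n. qpoch (csqrt k) q n \<noteq> 0" "\<And>n. qpoch (- csqrt k) q n \<noteq> 0"
  shows "f_term a k z q (Suc m) = lhs_term q (k / a) a k (1 / z) m"
proof -
  define w where "w = 1 / z"
  have "qpoch (csqrt k) q 1 * qpoch (- csqrt k) q 1 = 1 - k"
    by (simp add: qpoch_def algebra_simps flip: power2_eq_square)
  then have k1: "1 - k \<noteq> 0"
    using sqrt_nz[of 1] by (metis mult_eq_0_iff)
  have well_poised: "qpoch (q * csqrt k) q (m + 1) * qpoch (- q * csqrt k) q (m + 1) * (1 - k)
      = qpoch (csqrt k) q (m + 1) * qpoch (- csqrt k) q (m + 1) * (1 - k * q ^ (2 * m + 2))"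
    using qpoch_well_poised[of q "csqrt k" "m + 1"] by simp
  have qpoch_k: "qpoch k q (m + 1) * (1 - k * q ^ (m + 1)) = qpoch (q * k) q (m + 1) * (1 - k)"
    using qpoch_Suc_shift[of k q "m + 1"] by (simp add: qpoch_Suc mult.commute)
  have qpoch_z: "qpoch z q (m + 1) * (q * a / z) ^ (m + 1) = (q * a) ^ (m + 1) * ((\<Prod>j<m. w - q ^ j) * (w - q ^ m))"
    using qpoch_mult_power_divide[OF z, of q "m + 1" a] unfolding w_def by simp
  have qpoch_a: "qpoch (q * a) q (m + 2) = qpoch (q * a) q (m + 1) * (1 - a * q ^ (m + 2))"
    by (simp add: qpoch_Suc mult_ac)
  have qpoch_kw: "qpoch (q * (k * w)) q (m + 3) = qpoch (q * (k * w)) q (m + 1) * (1 - k * w * q ^ (m + 2)) * (1 - k * w * q ^ (m + 3))"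
    by (simp add: qpoch_Suc mult_ac eval_nat_numeral)
  have kz: "q * k / z = q * (k * w)"
    unfolding w_def by simp
  have qk: "qpoch (q * k) q (m + 1) \<noteq> 0"
    using H by (auto simp: admissible_def intro!: qpoch_nonzero)
  have nz: "qpoch (csqrt k) q (m + 1) \<noteq> 0" "qpoch (- csqrt k) q (m + 1) \<noteq> 0" "qpoch (q * k) q (m + 1) \<noteq> 0"
    "qpoch (q * (k * w)) q (m + 1) \<noteq> 0" "qpoch (q * a) q (m + 1) \<noteq> 0" "1 - q ^ (m + 1) \<noteq> 0" "1 - k \<noteq> 0"
    "1 - k * q ^ (m + 1) \<noteq> 0" "1 - a * q ^ (m + 2) \<noteq> 0" "1 - k * w * q ^ (m + 2) \<noteq> 0"
    "1 - k * w * q ^ (m + 3) \<noteq> 0"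
    using sqrt_nz qk k1 admissible_qpoch_nonzero[OF H[folded w_def]]
      admissible_factors_nonzero[OF H[folded w_def], of "m + 1"]
      admissible_factors_nonzero[OF H[folded w_def], of "m + 2"]
      admissible_factors_nonzero[OF H[folded w_def], of "m + 3"] by auto
  show ?thesis
    unfolding f_term_def lhs_term_def lhs_coeff_def lhs_weight_def Suc_eq_plus1 kz w_def[symmetric]
    by (rule f_term_eq_lhs_term_algebra[OF well_poised qpoch_k qpoch_z qpoch_a qpoch_kw nz])
qed

section \<open>The shift equation for the left-hand side\<close>

definition lhs_shifted_weight :: "complex \<Rightarrow> complex \<Rightarrow> complex \<Rightarrow> complex \<Rightarrow> nat \<Rightarrow> complex" where
  "lhs_shifted_weight q a k w m = (q * w - 1) * q ^ m * q ^ (m + 1) * (1 - q * a) * (1 - k * w * q)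
     * (1 - k * w * q^2) * (1 - k * q ^ (2 * m + 3)) / ((1 - k * q ^ (m + 2)) * (1 - q ^ (m + 1)))"

lemma prod_diff_power_shift:
  fixes w q :: complex
  shows "(\<Prod>j<m. w * q - q ^ j) * (w * q - q ^ m) = (q * w - 1) * q ^ m * (\<Prod>j<m. w - q ^ j)"
proof (induction m)
  case 0
  show ?case by (simp add: mult_ac)
next
  case (Suc m)
  have "w * q - q ^ Suc m = q * (w - q ^ m)"
    by (simp add: algebra_simps)
  then have "(\<Prod>j<Suc m. w * q - q ^ j) * (w * q - q ^ Suc m)
      = ((\<Prod>j<m. w * q - q ^ j) * (w * q - q ^ m)) * (q * (w - q ^ m))"
    by simp
  also have "\<dots> = (q * w - 1) * q ^ Suc m * (\<Prod>j<Suc m. w - q ^ j)"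
    unfolding Suc.IH by simp
  finally show ?case .
qed

(* lhs_term_shift with q^m and the q-Pochhammer products abstracted to variables, which makes it a
   polynomial identity after clearing denominators. *)
lemma lhs_term_shift_algebra:
  fixes Bz Ap Pw Pw' XA XK XA' XK' P q a k w :: complex
  assumes h1: "Pw' * (w * q - P) = (q * w - 1) * P * Pw"
    and h2: "XA' * (1 - q * a) = XA * (1 - a * q^3 * P)"
    and h3: "XK' * ((1 - q * (k * w)) * (1 - q * (k * w) * q)) = XK * (1 - k * w * q^4 * P) * (1 - k * w * q^5 * P)"
    and nz: "XA \<noteq> 0" "XK \<noteq> 0" "XA' \<noteq> 0" "XK' \<noteq> 0" "1 - k * q^2 * P \<noteq> 0" "1 - q * P \<noteq> 0"
  shows "Bz * (Ap * (q * P)) * (Pw' * (w * q - P)) * ((1 - a * q^3 * P) * (1 - k * w * q^4 * P)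
        * (1 - k * w * q^5 * P) * (1 - k * q^3 * P^2)) / (XA' * XK' * ((1 - k * q^2 * P) * (1 - q * P)))
    = Bz * Ap * Pw / (XA * XK) * ((q * w - 1) * P * (q * P) * (1 - q * a) * (1 - k * w * q)
        * (1 - k * w * q^2) * (1 - k * q^3 * P^2) / ((1 - k * q^2 * P) * (1 - q * P)))"
proof -
  have d1: "XA' * XK' * ((1 - k * q^2 * P) * (1 - q * P)) \<noteq> 0"
    and d2: "XA * XK * ((1 - k * q^2 * P) * (1 - q * P)) \<noteq> 0"
    using nz by simp_all
  show ?thesis
    unfolding h1 times_divide_times_eq frac_eq_eq[OF d1 d2] using h2 h3 by algebra
qed

lemma lhs_term_shift:
  assumes H: "admissible q a k w"
  shows "lhs_term q b (a * q) (k * q) (w * q) m = lhs_coeff q b a k w m * lhs_shifted_weight q a k w m"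
proof -
  have H': "admissible q (a * q) (k * q) (w * q)"
    by (rule admissible_shift[OF H])
  have qpoch_a: "qpoch (q * (a * q)) q (m + 2) * (1 - q * a) = qpoch (q * a) q (m + 2) * (1 - a * q^3 * q ^ m)"
  proof -
    have "qpoch (q * (a * q)) q (m + 2) * (1 - q * a) = qpoch (q * a) q (Suc (m + 2))"
      using qpoch_Suc_shift[of "q * a" q "m + 2"] by (simp add: mult_ac)
    then show ?thesis
      by (simp add: qpoch_Suc mult_ac power_add eval_nat_numeral)
  qed
  have qpoch_kw: "qpoch (q * (k * q * (w * q))) q (m + 3) * ((1 - q * (k * w)) * (1 - q * (k * w) * q))
      = qpoch (q * (k * w)) q (m + 3) * (1 - k * w * q^4 * q ^ m) * (1 - k * w * q^5 * q ^ m)"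
  proof -
    have "qpoch (q * (k * q * (w * q))) q (m + 3) * ((1 - q * (k * w)) * (1 - q * (k * w) * q))
        = (qpoch (q * (k * w) * q * q) q (m + 3) * (1 - q * (k * w) * q)) * (1 - q * (k * w))"
      by (simp add: mult_ac)
    also have "\<dots> = qpoch (q * (k * w)) q (Suc (Suc (m + 3)))"
      by (simp only: qpoch_Suc_shift)
    finally show ?thesis
      by (simp add: qpoch_Suc mult_ac power_add eval_nat_numeral)
  qed
  have nz: "qpoch (q * a) q (m + 2) \<noteq> 0" "qpoch (q * (k * w)) q (m + 3) \<noteq> 0"
    "qpoch (q * (a * q)) q (m + 2) \<noteq> 0" "qpoch (q * (k * q * (w * q))) q (m + 3) \<noteq> 0"
    using admissible_qpoch_nonzero[OF H] admissible_qpoch_nonzero[OF H'] by auto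
  have "1 - k * q ^ (m + 2) \<noteq> 0" "1 - q ^ (m + 1) \<noteq> 0"
    using admissible_factors_nonzero[OF H, of "m + 2"] admissible_factors_nonzero[OF H, of "m + 1"] by auto
  then have nz': "1 - k * q^2 * q ^ m \<noteq> 0" "1 - q * q ^ m \<noteq> 0"
    by (simp_all add: power_add mult_ac power2_eq_square)
  have "lhs_term q b (a * q) (k * q) (w * q) m
      = qpoch b q (Suc m) * ((q * a) ^ Suc m * (q * q ^ m)) * ((\<Prod>j<m. w * q - q ^ j) * (w * q - q ^ m))
        * ((1 - a * q^3 * q ^ m) * (1 - k * w * q^4 * q ^ m) * (1 - k * w * q^5 * q ^ m) * (1 - k * q^3 * (q ^ m)^2))
        / (qpoch (q * (a * q)) q (m + 2) * qpoch (q * (k * q * (w * q))) q (m + 3) * ((1 - k * q^2 * q ^ m) * (1 - q * q ^ m)))"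
    unfolding lhs_term_def lhs_coeff_def lhs_weight_def
    by (simp add: power_add power_mult power_mult_distrib eval_nat_numeral mult_ac)
  also have "\<dots> = qpoch b q (Suc m) * (q * a) ^ Suc m * (\<Prod>j<m. w - q ^ j) / (qpoch (q * a) q (m + 2) * qpoch (q * (k * w)) q (m + 3))
      * ((q * w - 1) * q ^ m * (q * q ^ m) * (1 - q * a) * (1 - k * w * q) * (1 - k * w * q^2) * (1 - k * q^3 * (q ^ m)^2)
        / ((1 - k * q^2 * q ^ m) * (1 - q * q ^ m)))"
    by (rule lhs_term_shift_algebra[OF prod_diff_power_shift qpoch_a qpoch_kw nz nz'])
  also have "\<dots> = lhs_coeff q b a k w m * lhs_shifted_weight q a k w m"
    unfolding lhs_coeff_def lhs_shifted_weight_def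
    by (simp add: power_add power_mult power_mult_distrib eval_nat_numeral mult_ac)
  finally show ?thesis .
qed

(* tele_factor is an antidifference: lhs_weight - lhs_shifted_weight equals
   tele_factor m - lhs_ratio m * tele_factor (m + 1) (lhs_weight_diff). Its numerator tele_num is the
   cubic in P = q^m forced by this recurrence. *)
definition tele_num :: "complex \<Rightarrow> complex \<Rightarrow> complex \<Rightarrow> complex \<Rightarrow> complex \<Rightarrow> complex" where
  "tele_num q a k w P = w*(1-q^2*a*w)
     + (-1+q*w-2*q^2*k*w^2-q^2*a*w^2-(q^2-q^3)*a*k*w^2+(q^3+q^4)*a*k*w^3+q^3*a^2*w^2)*P
     + (q*k^2*w^2+(1+q)*a*k*w+(q-q^2)*a*k*w^2-q^2*a*k^2*w^2-2*q^2*a^2*k*w^2+q^3*a^2*k^2*w^3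
        -q^4*a^2*k^2*w^4)*(q*P)^2
     - q*a*k^2*w^2*(1-q^2*a*w)*(q*P)^3"

lemma tele_num_tendsto:
  assumes "X \<longlonglongrightarrow> L"
  shows "(\<lambda>m. tele_num q a k w (X m)) \<longlonglongrightarrow> tele_num q a k w L"
  unfolding tele_num_def by (intro tendsto_intros assms)

lemma tele_num_identity:
  fixes q a k w P :: complex
  assumes D: "(1-q*a*w)*(1-q^2*a*w) \<noteq> 0"
    and nz: "1-k*q*P \<noteq> 0" "1-q*P \<noteq> 0" "1-k*q^2*P \<noteq> 0"
  shows "(w-P)*(1-a*q^2*P)*(1-k*w*q^2*P)*(1-k*w*q^3*P)*(1-k*q^2*P^2) / ((1-k*q*P)*(1-q*P))
       - (q*w-1)*P*(q*P)*(1-q*a)*(1-k*w*q)*(1-k*w*q^2)*(1-k*q^3*P^2) / ((1-k*q^2*P)*(1-q*P))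
     = tele_num q a k w P * (1-a*q^2*P) * (1-k*w*q^3*P) / ((1-q*a*w)*(1-q^2*a*w)*(1-k*q*P))
       - q*(a-k*q*P)*(w-P) * tele_num q a k w (q*P) / ((1-q*a*w)*(1-q^2*a*w)*(1-k*q^2*P))"
proof (rule diff_frac_eq_diff_frac)
  let ?D = "(1-q*a*w)*(1-q^2*a*w)"
  let ?X = "?D*(1-k*q*P)*(1-q*P)*(1-k*q^2*P)"
  show "((1-k*q*P)*(1-q*P)) * (?D*(1-k*q^2*P)) = ?X" "((1-k*q^2*P)*(1-q*P)) * (?D*(1-k*q*P)) = ?X"
    "(?D*(1-k*q*P)) * ((1-q*P)*(1-k*q^2*P)) = ?X" "(?D*(1-k*q^2*P)) * ((1-k*q*P)*(1-q*P)) = ?X"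
    by (simp_all only: mult_ac)
  show "?X \<noteq> 0" using D nz by simp
  show "(w-P)*(1-a*q^2*P)*(1-k*w*q^2*P)*(1-k*w*q^3*P)*(1-k*q^2*P^2) * (?D*(1-k*q^2*P))
      - (q*w-1)*P*(q*P)*(1-q*a)*(1-k*w*q)*(1-k*w*q^2)*(1-k*q^3*P^2) * (?D*(1-k*q*P))
    = tele_num q a k w P * (1-a*q^2*P) * (1-k*w*q^3*P) * ((1-q*P)*(1-k*q^2*P))
      - q*(a-k*q*P)*(w-P) * tele_num q a k w (q*P) * ((1-k*q*P)*(1-q*P))"
    unfolding tele_num_def by algebra
qed

definition tele_factor :: "complex \<Rightarrow> complex \<Rightarrow> complex \<Rightarrow> complex \<Rightarrow> nat \<Rightarrow> complex" where
  "tele_factor q a k w m = tele_num q a k w (q ^ m) * (1 - a * q ^ (m + 2)) * (1 - k * w * q ^ (m + 3))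
     / ((1 - q * a * w) * (1 - q^2 * a * w) * (1 - k * q ^ (m + 1)))"

definition tele_term :: "complex \<Rightarrow> complex \<Rightarrow> complex \<Rightarrow> complex \<Rightarrow> complex \<Rightarrow> nat \<Rightarrow> complex" where
  "tele_term q b a k w m = lhs_coeff q b a k w m * tele_factor q a k w m"

lemma lhs_weight_diff:
  assumes H: "admissible q a k w"
  shows "lhs_weight q a k w m - lhs_shifted_weight q a k w m
    = tele_factor q a k w m - q * (a - k * q ^ (m + 1)) * (w - q ^ m) * tele_num q a k w (q ^ (m + 1))
        / ((1 - q * a * w) * (1 - q^2 * a * w) * (1 - k * q ^ (m + 2)))"
proof -
  have "1 - k * q ^ (m + 1) \<noteq> 0" "1 - q ^ (m + 1) \<noteq> 0" "1 - k * q ^ (m + 2) \<noteq> 0"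
    using admissible_factors_nonzero[OF H, of "m + 1"] admissible_factors_nonzero[OF H, of "m + 2"] by auto
  then have "1 - k * q * q ^ m \<noteq> 0" "1 - q * q ^ m \<noteq> 0" "1 - k * q^2 * q ^ m \<noteq> 0"
    by (simp_all add: power_add mult_ac power2_eq_square)
  from tele_num_identity[OF admissible_aw_nonzero[OF H] this]
  show ?thesis
    unfolding lhs_weight_def lhs_shifted_weight_def tele_factor_def
    by (simp add: power_add power_mult eval_nat_numeral mult_ac)
qed

lemma lhs_ratio_mult_tele_factor:
  assumes H: "admissible q a k w" and kb: "k = b * a"
  shows "lhs_ratio q b a k w m * tele_factor q a k w (Suc m)
    = q * (a - k * q ^ (m + 1)) * (w - q ^ m) * tele_num q a k w (q ^ (m + 1))
        / ((1 - q * a * w) * (1 - q^2 * a * w) * (1 - k * q ^ (m + 2)))"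
proof -
  have nz: "1 - a * q ^ (m + 3) \<noteq> 0" "1 - k * w * q ^ (m + 4) \<noteq> 0"
    using admissible_factors_nonzero[OF H, of "m + 3"] admissible_factors_nonzero[OF H, of "m + 4"] by auto
  have exponents: "m + 1 + 1 = m + 2" "m + 1 + 2 = m + 3" "m + 1 + 3 = m + 4"
    by simp_all
  have "lhs_ratio q b a k w m * tele_factor q a k w (Suc m)
      = (1 - b * q ^ (m + 1)) * (q * a) * (w - q ^ m) / ((1 - a * q ^ (m + 3)) * (1 - k * w * q ^ (m + 4)))
        * (tele_num q a k w (q ^ (m + 1)) * (1 - a * q ^ (m + 3)) * (1 - k * w * q ^ (m + 4))
          / ((1 - q * a * w) * (1 - q^2 * a * w) * (1 - k * q ^ (m + 2))))"
    unfolding lhs_ratio_def tele_factor_def Suc_eq_plus1 exponents ..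
  also have "(1 - b * q ^ (m + 1)) * (q * a) * (w - q ^ m) = q * (a - k * q ^ (m + 1)) * (w - q ^ m)"
    unfolding kb by (simp add: algebra_simps)
  finally show ?thesis
    using nz by simp
qed

lemma lhs_term_telescopes:
  assumes H: "admissible q a k w" and kb: "k = b * a"
  shows "lhs_term q b a k w m - lhs_term q b (a * q) (k * q) (w * q) m
    = tele_term q b a k w m - tele_term q b a k w (Suc m)"
proof -
  have "lhs_term q b a k w m - lhs_term q b (a * q) (k * q) (w * q) m
      = lhs_coeff q b a k w m * (lhs_weight q a k w m - lhs_shifted_weight q a k w m)"
    unfolding lhs_term_shift[OF H] by (simp add: lhs_term_def algebra_simps)
  also have "\<dots> = lhs_coeff q b a k w m * (tele_factor q a k w m - lhs_ratio q b a k w m * tele_factor q a k w (Suc m))"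
    unfolding lhs_weight_diff[OF H] lhs_ratio_mult_tele_factor[OF H kb] ..
  also have "\<dots> = tele_term q b a k w m - tele_term q b a k w (Suc m)"
    unfolding tele_term_def lhs_coeff_Suc[OF H] by (simp add: algebra_simps)
  finally show ?thesis .
qed

lemma shift_defect_eq:
  assumes nz: "1 - k*q \<noteq> 0" "1 - a*w*q \<noteq> 0" "1 - a*w*q^2 \<noteq> 0" "1 - a*q \<noteq> 0"
    "1 - k*w*q \<noteq> 0" "1 - k*w*q^2 \<noteq> 0"
  shows "shift_defect q a k w
    = q*(a-k)*tele_num q a k w 1 / ((1-a*q)*(1-k*w*q)*(1-k*w*q^2)*(1-a*w*q)*(1-a*w*q^2)*(1-k*q))"
proof -
  have "x / (1 - x) * (1 - x) = x" if "1 - x \<noteq> 0" for x :: complex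
    using that by simp
  note fractions = this[OF nz(1)] this[OF nz(2)] this[OF nz(3)] this[OF nz(4)] this[OF nz(5)] this[OF nz(6)]
  have "shift_defect q a k w * ((1-a*q)*(1-k*w*q)*(1-k*w*q^2)*(1-a*w*q)*(1-a*w*q^2)*(1-k*q))
      = q*(a-k)*tele_num q a k w 1"
    unfolding shift_defect_def tele_num_def using fractions by algebra
  then show ?thesis
    using nz by (simp add: eq_divide_eq)
qed

lemma tele_term_0:
  assumes H: "admissible q a k w" and kb: "k = b * a"
  shows "tele_term q b a k w 0 = shift_defect q a k w"
proof -
  have nz: "1 - k*q \<noteq> 0" "1 - a*q \<noteq> 0" "1 - k*w*q \<noteq> 0" "1 - k*w*q^2 \<noteq> 0"
    "1 - a*q^2 \<noteq> 0" "1 - k*w*q^3 \<noteq> 0"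
    using admissible_factors_nonzero[OF H, of 1] admissible_factors_nonzero[OF H, of 2]
      admissible_factors_nonzero[OF H, of 3] by auto
  have "1 - q*a*w \<noteq> 0" "1 - q^2*a*w \<noteq> 0"
    using admissible_aw_nonzero[OF H] by auto
  then have nz': "1 - a*w*q \<noteq> 0" "1 - a*w*q^2 \<noteq> 0"
    by (simp_all add: mult_ac)
  have "tele_term q b a k w 0
      = (1 - b) * (q * a) * tele_num q a k w 1 * (1 - a*q^2) * (1 - k*w*q^3)
        / ((1 - q*a) * (1 - q*a*q) * ((1 - q*(k*w)) * (1 - q*(k*w)*q) * (1 - q*(k*w)*q^2))
          * ((1 - q*a*w) * (1 - q^2*a*w) * (1 - k*q)))"
    unfolding tele_term_def lhs_coeff_def tele_factor_def
    by (simp add: qpoch_def eval_nat_numeral lessThan_Suc times_divide_times_eq mult_ac)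
  also have "\<dots> = q*(a-k)*tele_num q a k w 1 / ((1-a*q)*(1-k*w*q)*(1-k*w*q^2)*(1-a*w*q)*(1-a*w*q^2)*(1-k*q))"
  proof (rule iffD2[OF frac_eq_eq])
    show "(1 - q*a) * (1 - q*a*q) * ((1 - q*(k*w)) * (1 - q*(k*w)*q) * (1 - q*(k*w)*q^2))
        * ((1 - q*a*w) * (1 - q^2*a*w) * (1 - k*q)) \<noteq> 0"
      "(1-a*q)*(1-k*w*q)*(1-k*w*q^2)*(1-a*w*q)*(1-a*w*q^2)*(1-k*q) \<noteq> 0"
      using nz nz' by (simp_all add: mult_ac power2_eq_square power3_eq_cube)
    show "(1 - b) * (q * a) * tele_num q a k w 1 * (1 - a*q^2) * (1 - k*w*q^3)
        * ((1-a*q)*(1-k*w*q)*(1-k*w*q^2)*(1-a*w*q)*(1-a*w*q^2)*(1-k*q))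
      = q*(a-k)*tele_num q a k w 1 * ((1 - q*a) * (1 - q*a*q) * ((1 - q*(k*w)) * (1 - q*(k*w)*q)
        * (1 - q*(k*w)*q^2)) * ((1 - q*a*w) * (1 - q^2*a*w) * (1 - k*q)))"
      unfolding kb by algebra
  qed
  also have "\<dots> = shift_defect q a k w"
    using shift_defect_eq[OF nz(1) nz' nz(2-4)] ..
  finally show ?thesis .
qed

lemma tele_term_tendsto_0:
  assumes H: "admissible q a k w"
  shows "tele_term q b a k w \<longlonglongrightarrow> 0"
proof -
  have q: "norm q < 1"
    using admissible_norm[OF H] by simp
  note power_lim = LIMSEQ_power_zero[OF q] LIMSEQ_ignore_initial_segment[OF LIMSEQ_power_zero[OF q]]
  have "tele_term q b a k w \<longlonglongrightarrow> 0 * (tele_num q a k w 0 * (1 - a * 0) * (1 - k * w * 0)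
      / ((1 - q * a * w) * (1 - q^2 * a * w) * (1 - k * 0)))"
    unfolding tele_term_def[abs_def] tele_factor_def
    by (intro tendsto_intros tele_num_tendsto lhs_coeff_tendsto_0 H power_lim)
      (use admissible_aw_nonzero[OF H] in simp)
  then show ?thesis by simp
qed

lemma lhs_sum_shift:
  assumes H: "admissible q a k w" and kb: "k = b * a"
  shows "lhs_sum q b a k w - lhs_sum q b (a * q) (k * q) (w * q) = shift_defect q a k w"
proof -
  have "(\<lambda>m. tele_term q b a k w m - tele_term q b a k w (Suc m)) sums (tele_term q b a k w 0 - 0)"
    by (rule telescope_sums'[OF tele_term_tendsto_0[OF H]])
  then have "(\<lambda>m. lhs_term q b a k w m - lhs_term q b (a * q) (k * q) (w * q) m) sums shift_defect q a k w"
    by (simp add: lhs_term_telescopes[OF H kb] tele_term_0[OF H kb])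
  moreover have "(\<lambda>m. lhs_term q b a k w m - lhs_term q b (a * q) (k * q) (w * q) m)
      sums (lhs_sum q b a k w - lhs_sum q b (a * q) (k * q) (w * q))"
    unfolding lhs_sum_def by (intro sums_diff summable_sums summable_lhs_term H admissible_shift)
  ultimately show ?thesis
    by (simp add: sums_unique2)
qed

section \<open>Decay under iterated shifts\<close>

lemma norm_lhs_ratio_le:
  assumes q: "norm q \<le> 1" and small: "norm a \<le> 1/2" "norm k \<le> 1/2" "norm w \<le> 1/2"
  shows "norm (lhs_ratio q b a k w m) \<le> 6 * (1 + norm b) * norm (q * a)"
proof -
  have kw: "norm (k * w) \<le> 1/2"
    using mult_mono[OF small(2,3)] by (simp add: norm_mult)
  have "norm (1 - b * q ^ Suc m) \<le> 1 + norm b"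
    using norm_triangle_ineq4[of 1 "b * q ^ Suc m"] norm_mult_power_le[OF q, of b "Suc m"] by simp
  moreover have "norm (w - q ^ m) \<le> 3/2"
    using norm_triangle_ineq4[of w "q ^ m"] norm_mult_power_le[OF q, of 1 m] small(3) by simp
  ultimately have "norm ((1 - b * q ^ Suc m) * (q * a) * (w - q ^ m)) \<le> (1 + norm b) * norm (q * a) * (3/2)"
    unfolding norm_mult[of _ "w - q ^ m"] norm_mult[of "1 - b * q ^ Suc m"]
    by (intro mult_mono) auto
  moreover have "1/2 * (1/2) \<le> norm ((1 - a * q ^ (m + 3)) * (1 - k * w * q ^ (m + 4)))"
    unfolding norm_mult
    by (intro mult_mono norm_one_minus_mult_power_bounds(1) q small(1) kw) auto
  ultimately have "norm (lhs_ratio q b a k w m) \<le> (1 + norm b) * norm (q * a) * (3/2) / (1/2 * (1/2))"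
    unfolding lhs_ratio_def norm_divide by (intro frac_le) auto
  then show ?thesis by (simp add: algebra_simps)
qed

lemma norm_lhs_weight_le:
  assumes q: "norm q < 1" and small: "norm a \<le> 1/2" "norm k \<le> 1/2" "norm w \<le> 1/2"
  shows "norm (lhs_weight q a k w m) \<le> (3/2)^5 / (1/2 * (1 - norm q))"
proof -
  have q1: "norm q \<le> 1"
    using q by simp
  have kw: "norm (k * w) \<le> 1/2"
    using mult_mono[OF small(2,3)] by (simp add: norm_mult)
  note bounds = norm_one_minus_mult_power_bounds[OF q1]
  have "norm (w - q ^ m) \<le> 3/2"
    using norm_triangle_ineq4[of w "q ^ m"] norm_mult_power_le[OF q1, of 1 m] small(3) by simp
  then have "norm ((w - q ^ m) * (1 - a * q ^ (m + 2)) * (1 - k * w * q ^ (m + 2))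
      * (1 - k * w * q ^ (m + 3)) * (1 - k * q ^ (2 * m + 2))) \<le> (3/2) * (3/2) * (3/2) * (3/2) * (3/2)"
    unfolding norm_mult by (intro mult_mono bounds(2) small kw) auto
  moreover have "1 - norm q \<le> norm (1 - q ^ (m + 1))"
    using norm_triangle_ineq2[of 1 "q ^ (m + 1)"] norm_mult_power_le[OF q1, of q m] by (simp add: mult.commute)
  then have "1/2 * (1 - norm q) \<le> norm ((1 - k * q ^ (m + 1)) * (1 - q ^ (m + 1)))"
    unfolding norm_mult using q by (intro mult_mono bounds(1) small) auto
  ultimately show ?thesis
    unfolding lhs_weight_def norm_divide using q by (intro frac_le) (auto simp: eval_nat_numeral)
qed

lemma norm_lhs_sum_le:
  assumes H: "admissible q a k w" and small: "norm a \<le> 1/2" "norm k \<le> 1/2" "norm w \<le> 1/2"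
    and ratio: "6 * (1 + norm b) * norm (q * a) \<le> 1/2"
  shows "norm (lhs_sum q b a k w) \<le> 2 * ((3/2)^5 / (1/2 * (1 - norm q))) * norm (lhs_coeff q b a k w 0)"
  unfolding lhs_sum_def lhs_term_def[abs_def]
proof (rule norm_suminf_mult_le)
  have q: "norm q < 1"
    using admissible_norm[OF H] by simp
  show "norm (lhs_coeff q b a k w (Suc m)) \<le> norm (lhs_coeff q b a k w m) / 2" for m
  proof -
    have "norm (lhs_ratio q b a k w m) \<le> 1/2"
      using norm_lhs_ratio_le[of q a k w b m] q small ratio by linarith
    then have "norm (lhs_coeff q b a k w m) * norm (lhs_ratio q b a k w m) \<le> norm (lhs_coeff q b a k w m) * (1/2)"
      by (intro mult_left_mono) auto
    then show ?thesis
      by (simp add: lhs_coeff_Suc[OF H] norm_mult)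
  qed
  show "norm (lhs_weight q a k w m) \<le> (3/2)^5 / (1/2 * (1 - norm q))" for m
    by (rule norm_lhs_weight_le[OF q small])
qed

lemma lhs_coeff_0_shift_power_tendsto_0:
  assumes q: "norm q < 1"
  shows "(\<lambda>N. lhs_coeff q b (a * q ^ N) (k * q ^ N) (w * q ^ N) 0) \<longlonglongrightarrow> 0"
proof -
  have "(\<lambda>N. lhs_coeff q b (a * q ^ N) (k * q ^ N) (w * q ^ N) 0) \<longlonglongrightarrow>
      qpoch b q (Suc 0) * (q * (a * 0)) ^ Suc 0 * (\<Prod>j<0. w * 0 - q ^ j)
        / (qpoch (q * (a * 0)) q (0 + 2) * qpoch (q * (k * 0 * (w * 0))) q (0 + 3))"
    unfolding lhs_coeff_def
    by (intro tendsto_intros qpoch_tendsto LIMSEQ_power_zero q) (simp add: qpoch_def)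
  then show ?thesis by simp
qed

lemma lhs_sum_shift_power_tendsto_0:
  assumes H: "admissible q a k w"
  shows "(\<lambda>N. lhs_sum q b (a * q ^ N) (k * q ^ N) (w * q ^ N)) \<longlonglongrightarrow> 0"
proof (rule Lim_null_comparison)
  define C where "C = 2 * ((3/2)^5 / (1/2 * (1 - norm q)))"
  have q: "norm q < 1"
    using admissible_norm[OF H] by simp
  have lim: "(\<lambda>N. x * q ^ N) \<longlonglongrightarrow> 0" for x
    by (rule tendsto_mult_right_zero[OF LIMSEQ_power_zero[OF q]])
  have "(\<lambda>N. 6 * (1 + norm b) * norm (q * (a * q ^ N))) \<longlonglongrightarrow> 0"
    by (intro tendsto_mult_right_zero tendsto_norm_zero lim)
  then have "eventually (\<lambda>N. 6 * (1 + norm b) * norm (q * (a * q ^ N)) < 1/2) sequentially"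
    by (rule order_tendstoD(2)) simp
  with eventually_norm_le_half[OF lim[of a]] eventually_norm_le_half[OF lim[of k]]
    eventually_norm_le_half[OF lim[of w]]
  show "eventually (\<lambda>N. norm (lhs_sum q b (a * q ^ N) (k * q ^ N) (w * q ^ N))
      \<le> C * norm (lhs_coeff q b (a * q ^ N) (k * q ^ N) (w * q ^ N) 0)) sequentially"
    unfolding C_def
    by eventually_elim (intro norm_lhs_sum_le admissible_shift_power H, auto)
  show "(\<lambda>N. C * norm (lhs_coeff q b (a * q ^ N) (k * q ^ N) (w * q ^ N) 0)) \<longlonglongrightarrow> 0"
    by (intro tendsto_mult_right_zero tendsto_norm_zero lhs_coeff_0_shift_power_tendsto_0 q)
qed

lemma lhs_sum_eq_rhs_sum:
  assumes H: "admissible q a k w" and kb: "k = b * a"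
  shows "lhs_sum q b a k w = rhs_sum q a k w"
proof -
  define G where "G N = lhs_sum q b (a * q ^ N) (k * q ^ N) (w * q ^ N) - rhs_sum q (a * q ^ N) (k * q ^ N) (w * q ^ N)" for N
  have q: "norm q < 1"
    using admissible_norm[OF H] by simp
  have step: "G (Suc N) = G N" for N
  proof -
    have shift: "x * q ^ Suc N = x * q ^ N * q" for x :: complex
      by (simp add: mult.assoc)
    have kbN: "k * q ^ N = b * (a * q ^ N)"
      using kb by simp
    have same_defect: "A' - B' = A - B" if "A - A' = S" "B - B' = S" for A A' B B' S :: complex
      using that by (simp add: algebra_simps)
    show ?thesis
      unfolding G_def shift
      by (rule same_defect[OF lhs_sum_shift[OF admissible_shift_power[OF H] kbN]
            rhs_sum_shift[OF q, of "a * q ^ N" "k * q ^ N" "w * q ^ N"]])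
  qed
  have const: "G = (\<lambda>_. G 0)"
  proof
    show "G N = G 0" for N
      by (induction N) (simp_all add: step)
  qed
  have "G \<longlonglongrightarrow> 0 - 0"
    unfolding G_def[abs_def]
    by (intro tendsto_diff lhs_sum_shift_power_tendsto_0 rhs_sum_shift_power_tendsto_0 H q)
  then have "G 0 = 0"
    by (subst (asm) const) (simp add: LIMSEQ_const_iff)
  then show ?thesis
    by (simp add: G_def)
qed

theorem lemma2p3:
  fixes a k z q :: complex
  assumes "norm q < 1" and "norm (q * a) < norm z"
    and "\<And>n. qpoch (csqrt k) q n \<noteq> 0" and "\<And>n. qpoch (- csqrt k) q n \<noteq> 0"
    and "\<And>n. qpoch (q * k) q n \<noteq> 0" and "\<And>n. qpoch (q * k / z) q n \<noteq> 0"
    and "\<And>n. qpoch (q * a) q n \<noteq> 0"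
    and "a \<noteq> 0"
    and "\<And>n. n \<ge> 1 \<Longrightarrow> 1 - q ^ n \<noteq> 0"
    and "\<And>n. n \<ge> 1 \<Longrightarrow> 1 - k * q ^ n \<noteq> 0"
    and "\<And>n. n \<ge> 1 \<Longrightarrow> 1 - q ^ n * a / z \<noteq> 0"
    and "\<And>n. n \<ge> 1 \<Longrightarrow> 1 - a * q ^ n \<noteq> 0"
    and "\<And>n. n \<ge> 1 \<Longrightarrow> 1 - q ^ n * k / z \<noteq> 0"
  shows "summable (\<lambda>n. f_term a k z q (Suc n))
    \<and> summable (\<lambda>n. k * q ^ Suc n / (1 - k * q ^ Suc n))
    \<and> summable (\<lambda>n. q ^ Suc n * a / z / (1 - q ^ Suc n * a / z))
    \<and> summable (\<lambda>n. a * q ^ Suc n / (1 - a * q ^ Suc n))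
    \<and> summable (\<lambda>n. q ^ Suc n * k / z / (1 - q ^ Suc n * k / z))
    \<and> f a k z q =
        (\<Sum>n. k * q ^ Suc n / (1 - k * q ^ Suc n))
      + (\<Sum>n. q ^ Suc n * a / z / (1 - q ^ Suc n * a / z))
      - (\<Sum>n. a * q ^ Suc n / (1 - a * q ^ Suc n))
      - (\<Sum>n. q ^ Suc n * k / z / (1 - q ^ Suc n * k / z))"
proof -
  have q: "norm q < 1" and z: "z \<noteq> 0"
    using assms(1,2) by auto
  have over_z: "q ^ n * x / z = x * (1 / z) * q ^ n" for x n
    by simp
  have "norm (q * a * (1 / z)) < 1"
    using assms(2) z by (simp add: norm_divide)
  moreover have "1 - k * q ^ Suc e \<noteq> 0" "1 - a * q ^ Suc e \<noteq> 0" "1 - k * (1 / z) * q ^ Suc e \<noteq> 0" for e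
    using assms(10)[of "Suc e"] assms(12)[of "Suc e"] assms(13)[of "Suc e", unfolded over_z] by simp_all
  ultimately have H: "admissible q a k (1 / z)"
    using q unfolding admissible_def by blast
  have lhs: "(\<lambda>n. f_term a k z q (Suc n)) = lhs_term q (k / a) a k (1 / z)"
    using f_term_eq_lhs_term[OF z H assms(3,4)] by blast
  have rhs: "(\<lambda>n. x * q ^ Suc n / (1 - x * q ^ Suc n)) = lambert_term q x"
    "(\<lambda>n. q ^ Suc n * x / z / (1 - q ^ Suc n * x / z)) = lambert_term q (x * (1 / z))" for x
    unfolding lambert_term_def over_z by (simp_all add: mult_ac)
  have "f a k z q = rhs_sum q a k (1 / z)"
    unfolding f_def lhs lhs_sum_def[symmetric]
    by (rule lhs_sum_eq_rhs_sum[OF H]) (use assms(8) in simp)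
  then show ?thesis
    unfolding lhs rhs rhs_sum_def using summable_lhs_term[OF H] summable_lambert_term[OF q] by blast
qed

end
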